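(* Consider the ideal MHD system in Eulerian Clebsch variables with dependent variables $z=(z^1,\dots,z^{15})=(u^1,u^2,u^3,\rho,S,\mu,B^1,B^2,B^3,\Gamma^1,\Gamma^2,\Gamma^3,\lambda,\beta,\phi)$, functions of $(x^0,x^1,x^2,x^3)=(t,x,y,z)$, and let $\varepsilon(\rho,S)$ be a smooth internal energy density and $\mu_0>0$ a constant. Define the one-forms on $z$-space $$\omega^0=\phi\,d\rho+\beta\,dS+\lambda\,d\mu+\Gamma_s\,dB^s,$$ $$\omega^i=u^i(\beta\,dS+\lambda\,d\mu+\phi\,d\rho)+\rho\phi\,du^i+(\Gamma_sB^s)\,du^i-B^i\,\Gamma_s\,du^s+u^i\,\Gamma_s\,dB^s\quad(i=1,2,3),$$ and write $\omega^\alpha=L^\alpha_j(z)\,dz^j$. Let $H(z)=-\left(\tfrac12\rho u^2-\varepsilon(\rho,S)-\tfrac{B^2}{2\mu_0}\right)$ and $\mathsf{K}^\alpha_{ij}=\partial L^\alpha_j/\partial z^i-\partial L^\alpha_i/\partial z^j$. Let $dV=dt\wedge dx\wedge dy\wedge dz$, $d\tilde{x}_\alpha=\partial_{x^\alpha}\lrcorner dV=(-1)^\alpha dx^0\wedge\cdots\wedge\widehat{dx^\alpha}\wedge\cdots\wedge dx^3$, and define the 4-form on $(x,z)$-space $$\Theta=\omega^\alpha\wedge d\tilde{x}_\alpha-H\,dV.$$ For a section $\psi: x\mapsto (x,z(x))$, the pullback satisfies $\psi^*(\Theta)=L\,dV$, where $L=L^\alpha_j(z)\,\partial z^j/\partial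 x^\alpha-H(z)$ is the constrained Lagrangian $$L=\tfrac12\rho u^2-\varepsilon(\rho,S)-\tfrac{B^2}{2\mu_0}+\phi\big(\rho_t+\nabla\cdot(\rho\mathbf{u})\big)+\beta\big(S_t+\mathbf{u}\cdot\nabla S\big)+\lambda\big(\mu_t+\mathbf{u}\cdot\nabla\mu\big)+\boldsymbol{\Gamma}\cdot\big(\mathbf{B}_t-\nabla\times(\mathbf{u}\times\mathbf{B})+\mathbf{u}(\nabla\cdot\mathbf{B})\big).$$ Moreover, the stationary point conditions $\delta J/\delta z^i=0$ of the action $J=\int\psi^*(\Theta)=\int L\,dV$ are $$\frac{\partial L}{\partial z^i}-\frac{\partial}{\partial x^\alpha}\left(\frac{\partial L}{\partial z^i_{,\alpha}}\right)=\mathsf{K}^\alpha_{ij}\frac{\partial z^j}{\partial x^\alpha}-\frac{\partial H}{\partial z^i}=0,\quad i=1,\dots,15,$$ i.e. the multi-symplectic system $\mathsf{K}^\alpha_{ij}\,\partial z^j/\partial x^\alpha=\partial H/\partial z^i$ is the set of stationary point conditions of $J$.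
   Context: Summation is over repeated indices: $\alpha=0,\dots,3$, $j=1,\dots,15$, $s=1,2,3$. Here $\rho$ is density, $\mathbf{u}$ velocity, $S$ entropy, $\mu$ a Lin constraint variable, $\mathbf{B}$ magnetic field, and $\phi,\beta,\lambda,\boldsymbol{\Gamma}$ are Lagrange multipliers (Clebsch potentials); $z^j_{,\alpha}=\partial z^j/\partial x^\alpha$, $u^2=|\mathbf{u}|^2$, $B^2=|\mathbf{B}|^2$, $\Gamma_s=\Gamma^s$. *)

theory Defs
  imports "HOL-Analysis.Analysis"
begin

text \<open>Dependent variables z = (z 1, ..., z 15) =
 (u1,u2,u3, rho, S, mu, B1,B2,B3, Gamma1,Gamma2,Gamma3, lambda, beta, phi),
 represented as z :: nat => real (only indices 1..15 matter).
 Independent variables x = (x^0,..,x^3) = (t,x,y,z) :: real^4, coordinate alpha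
 (alpha :: nat in 0..3) is the component of_nat alpha of the 4-element index type.
 First derivatives z^j_{,alpha} are represented by p :: nat => nat => real,
 p alpha j = dz^j/dx^alpha.\<close>

definition Lc :: "nat \<Rightarrow> nat \<Rightarrow> (nat \<Rightarrow> real) \<Rightarrow> real" where
  "Lc \<alpha> j z =
    (if \<alpha> = 0 then
       (if j = 4 then z 15          \<comment> \<open>phi d rho\<close>
        else if j = 5 then z 14     \<comment> \<open>beta dS\<close>
        else if j = 6 then z 13     \<comment> \<open>lambda d mu\<close>
        else if 7 \<le> j \<and> j \<le> 9 then z (j + 3)   \<comment> \<open>Gamma_s dB^s\<close>
        else 0)
     else if \<alpha> \<in> {1,2,3} then
       (if j \<in> {1,2,3} then
          (if j = \<alpha> then z 4 * z 15 + (\<Sum>s\<in>{1..3}. z (9 + s) * z (6 + s)) else 0)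
          - z (6 + \<alpha>) * z (9 + j)
        else if j = 4 then z \<alpha> * z 15
        else if j = 5 then z \<alpha> * z 14
        else if j = 6 then z \<alpha> * z 13
        else if 7 \<le> j \<and> j \<le> 9 then z \<alpha> * z (j + 3)
        else 0)
     else 0)"

definition Ham :: "(real \<times> real \<Rightarrow> real) \<Rightarrow> real \<Rightarrow> (nat \<Rightarrow> real) \<Rightarrow> real" where
  "Ham \<epsilon> \<mu>\<^sub>0 z = - ((1/2) * z 4 * (\<Sum>k\<in>{1..3}. (z k)\<^sup>2) - \<epsilon> (z 4, z 5)
                     - (\<Sum>k\<in>{1..3}. (z (6 + k))\<^sup>2) / (2 * \<mu>\<^sub>0))"

definition dz :: "((nat \<Rightarrow> real) \<Rightarrow> real) \<Rightarrow> (nat \<Rightarrow> real) \<Rightarrow> nat \<Rightarrow> real" where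
  "dz F z i = deriv (\<lambda>t. F (z(i := t))) (z i)"

definition dzL :: "((nat \<Rightarrow> real) \<Rightarrow> (nat \<Rightarrow> nat \<Rightarrow> real) \<Rightarrow> real)
                   \<Rightarrow> (nat \<Rightarrow> real) \<Rightarrow> (nat \<Rightarrow> nat \<Rightarrow> real) \<Rightarrow> nat \<Rightarrow> real" where
  "dzL F z p i = deriv (\<lambda>t. F (z(i := t)) p) (z i)"

definition dpL :: "((nat \<Rightarrow> real) \<Rightarrow> (nat \<Rightarrow> nat \<Rightarrow> real) \<Rightarrow> real)
                   \<Rightarrow> (nat \<Rightarrow> real) \<Rightarrow> (nat \<Rightarrow> nat \<Rightarrow> real) \<Rightarrow> nat \<Rightarrow> nat \<Rightarrow> real" where
  "dpL F z p \<alpha> i = deriv (\<lambda>t. F z (p(\<alpha> := (p \<alpha>)(i := t)))) (p \<alpha> i)"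

definition pdx :: "nat \<Rightarrow> (real^4 \<Rightarrow> real) \<Rightarrow> real^4 \<Rightarrow> real" where
  "pdx \<alpha> f x = deriv (\<lambda>t. f (x + t *\<^sub>R axis (of_nat \<alpha> :: 4) 1)) 0"

definition Kmat :: "nat \<Rightarrow> nat \<Rightarrow> nat \<Rightarrow> (nat \<Rightarrow> real) \<Rightarrow> real" where
  "Kmat \<alpha> i j z = dz (Lc \<alpha> j) z i - dz (Lc \<alpha> i) z j"

text \<open>A 3-form on x-space is represented by its coefficients c gamma with respect to
 the basis dx^0 ^ ... ^ (omit dx^gamma) ^ ... ^ dx^3 (increasing order), gamma = 0..3.
 d x~_alpha = (-1)^alpha dx^0 ^ ... ^ (omit dx^alpha) ^ ... ^ dx^3.\<close>
definition dxt :: "nat \<Rightarrow> nat \<Rightarrow> real" where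
  "dxt \<alpha> = (\<lambda>\<gamma>. if \<gamma> = \<alpha> then (-1) ^ \<alpha> else 0)"

text \<open>dV-coefficient of the wedge of a 1-form a (a beta = coefficient of dx^beta) with
 a 3-form c: dx^beta ^ (dx^0 ^..omit beta..^ dx^3) = (-1)^beta dV.\<close>
definition wedge13 :: "(nat \<Rightarrow> real) \<Rightarrow> (nat \<Rightarrow> real) \<Rightarrow> real" where
  "wedge13 a c = (\<Sum>\<beta>\<in>{0..3}. (-1) ^ \<beta> * a \<beta> * c \<beta>)"

text \<open>Pullback under a section psi of the 1-form omega^alpha = L^alpha_j(z) dz^j:
 coefficient of dx^beta is L^alpha_j(z) z^j_{,beta}.\<close>
definition pull_omega :: "nat \<Rightarrow> (nat \<Rightarrow> real) \<Rightarrow> (nat \<Rightarrow> nat \<Rightarrow> real) \<Rightarrow> nat \<Rightarrow> real" where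
  "pull_omega \<alpha> z p = (\<lambda>\<beta>. \<Sum>j\<in>{1..15}. Lc \<alpha> j z * p \<beta> j)"

definition pull_Theta :: "(real \<times> real \<Rightarrow> real) \<Rightarrow> real \<Rightarrow> (nat \<Rightarrow> real) \<Rightarrow> (nat \<Rightarrow> nat \<Rightarrow> real) \<Rightarrow> real" where
  "pull_Theta \<epsilon> \<mu>\<^sub>0 z p = (\<Sum>\<alpha>\<in>{0..3}. wedge13 (pull_omega \<alpha> z p) (dxt \<alpha>)) - Ham \<epsilon> \<mu>\<^sub>0 z"

definition Lagr :: "(real \<times> real \<Rightarrow> real) \<Rightarrow> real \<Rightarrow> (nat \<Rightarrow> real) \<Rightarrow> (nat \<Rightarrow> nat \<Rightarrow> real) \<Rightarrow> real" where
  "Lagr \<epsilon> \<mu>\<^sub>0 z p = (\<Sum>\<alpha>\<in>{0..3}. \<Sum>j\<in>{1..15}. Lc \<alpha> j z * p \<alpha> j) - Ham \<epsilon> \<mu>\<^sub>0 z"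

definition zval :: "(nat \<Rightarrow> real^4 \<Rightarrow> real) \<Rightarrow> real^4 \<Rightarrow> nat \<Rightarrow> real" where
  "zval Z x = (\<lambda>j. Z j x)"

definition dval :: "(nat \<Rightarrow> real^4 \<Rightarrow> real) \<Rightarrow> real^4 \<Rightarrow> nat \<Rightarrow> nat \<Rightarrow> real" where
  "dval Z x = (\<lambda>\<alpha> j. pdx \<alpha> (Z j) x)"

definition cross3 :: "(nat \<Rightarrow> real) \<Rightarrow> (nat \<Rightarrow> real) \<Rightarrow> nat \<Rightarrow> real" where
  "cross3 a b m =
     (if m = 1 then a 2 * b 3 - a 3 * b 2
      else if m = 2 then a 3 * b 1 - a 1 * b 3
      else if m = 3 then a 1 * b 2 - a 2 * b 1 else 0)"

definition crossF :: "(nat \<Rightarrow> real^4 \<Rightarrow> real) \<Rightarrow> (nat \<Rightarrow> real^4 \<Rightarrow> real) \<Rightarrow> nat \<Rightarrow> real^4 \<Rightarrow> real" where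
  "crossF a b m = (\<lambda>y. cross3 (\<lambda>k. a k y) (\<lambda>k. b k y) m)"

definition curlF :: "(nat \<Rightarrow> real^4 \<Rightarrow> real) \<Rightarrow> nat \<Rightarrow> real^4 \<Rightarrow> real" where
  "curlF W m x =
     (if m = 1 then pdx 2 (W 3) x - pdx 3 (W 2) x
      else if m = 2 then pdx 3 (W 1) x - pdx 1 (W 3) x
      else if m = 3 then pdx 1 (W 2) x - pdx 2 (W 1) x else 0)"

definition Lexpl :: "(real \<times> real \<Rightarrow> real) \<Rightarrow> real \<Rightarrow> (nat \<Rightarrow> real^4 \<Rightarrow> real) \<Rightarrow> real^4 \<Rightarrow> real" where
  "Lexpl \<epsilon> \<mu>\<^sub>0 Z x =
    (let u = (\<lambda>k. Z k); \<rho> = Z 4; S = Z 5; \<mu> = Z 6; B = (\<lambda>k. Z (6 + k));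
         \<Gamma> = (\<lambda>k. Z (9 + k)); lam = Z 13; \<beta> = Z 14; \<phi> = Z 15 in
      (1/2) * \<rho> x * (\<Sum>k\<in>{1..3}. (u k x)\<^sup>2) - \<epsilon> (\<rho> x, S x)
      - (\<Sum>k\<in>{1..3}. (B k x)\<^sup>2) / (2 * \<mu>\<^sub>0)
      + \<phi> x * (pdx 0 \<rho> x + (\<Sum>k\<in>{1..3}. pdx k (\<lambda>y. \<rho> y * u k y) x))
      + \<beta> x * (pdx 0 S x + (\<Sum>k\<in>{1..3}. u k x * pdx k S x))
      + lam x * (pdx 0 \<mu> x + (\<Sum>k\<in>{1..3}. u k x * pdx k \<mu> x))
      + (\<Sum>m\<in>{1..3}. \<Gamma> m x *
           (pdx 0 (B m) x - curlF (crossF u B) m x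
            + u m x * (\<Sum>k\<in>{1..3}. pdx k (B k) x))))"

definition EL :: "(real \<times> real \<Rightarrow> real) \<Rightarrow> real \<Rightarrow> (nat \<Rightarrow> real^4 \<Rightarrow> real) \<Rightarrow> nat \<Rightarrow> real^4 \<Rightarrow> real" where
  "EL \<epsilon> \<mu>\<^sub>0 Z i x =
     dzL (Lagr \<epsilon> \<mu>\<^sub>0) (zval Z x) (dval Z x) i
     - (\<Sum>\<alpha>\<in>{0..3}. pdx \<alpha> (\<lambda>y. dpL (Lagr \<epsilon> \<mu>\<^sub>0) (zval Z y) (dval Z y) \<alpha> i) x)"

end

theory Submission
  imports Defs
begin

text \<open>Since dx^\<beta> \<wedge> dx~_\<alpha> = \<delta>^\<beta>_\<alpha> dV, the pullback of \<Theta> is the Lagrangian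
  L = L^\<alpha>_j(z) z^j_,\<alpha> - H(z). It is affine in the jet variables, with dL/dz^i_,\<alpha> = L^\<alpha>_i(z),
  whose total x^\<alpha>-derivative is (d_j L^\<alpha>_i) z^j_,\<alpha> by the chain rule; subtracting this from
  dL/dz^i = (d_i L^\<alpha>_j) z^j_,\<alpha> - d_i H leaves K^\<alpha>_ij z^j_,\<alpha> - d_i H.
  The explicit form of L only needs the product rule, for \<nabla>\<cdot>(\<rho>u) and \<nabla>\<times>(u\<times>B).\<close>

abbreviation coord_axis :: "nat \<Rightarrow> real^4" where
  "coord_axis \<alpha> \<equiv> axis (of_nat \<alpha> :: 4) 1"

lemma pdx_has_derivative:
  assumes "(f has_derivative f') (at x)"
  shows "pdx \<alpha> f x = f' (coord_axis \<alpha>)"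
proof -
  have line: "((\<lambda>t::real. x + t *\<^sub>R coord_axis \<alpha>) has_derivative (\<lambda>t. t *\<^sub>R coord_axis \<alpha>)) (at 0)"
    by (auto intro!: derivative_eq_intros)
  have "((f \<circ> (\<lambda>t. x + t *\<^sub>R coord_axis \<alpha>)) has_derivative (f' \<circ> (\<lambda>t. t *\<^sub>R coord_axis \<alpha>))) (at 0)"
    using diff_chain_at[OF line] assms by simp
  moreover have "f' \<circ> (\<lambda>t. t *\<^sub>R coord_axis \<alpha>) = (*) (f' (coord_axis \<alpha>))"
    using linear_scale[OF has_derivative_linear[OF assms]] by (auto simp: fun_eq_iff)
  ultimately have "((\<lambda>t. f (x + t *\<^sub>R coord_axis \<alpha>)) has_field_derivative f' (coord_axis \<alpha>)) (at 0)"
    by (simp add: has_field_derivative_def comp_def)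
  then show ?thesis
    unfolding pdx_def by (rule DERIV_imp_deriv)
qed

lemma pdx_frechet_derivative:
  "f differentiable (at x) \<Longrightarrow> pdx \<alpha> f x = frechet_derivative f (at x) (coord_axis \<alpha>)"
  by (rule pdx_has_derivative) (simp add: frechet_derivative_works[symmetric])

lemma pdx_mult:
  assumes "f differentiable (at x)" "g differentiable (at x)"
  shows "pdx \<alpha> (\<lambda>y. f y * g y) x = f x * pdx \<alpha> g x + pdx \<alpha> f x * g x"
proof -
  have "((\<lambda>y. f y * g y) has_derivative
      (\<lambda>h. f x * frechet_derivative g (at x) h + frechet_derivative f (at x) h * g x)) (at x)"
    using assms by (intro has_derivative_mult) (simp_all add: frechet_derivative_works[symmetric])
  then show ?thesis
    using assms by (simp add: pdx_has_derivative pdx_frechet_derivative)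
qed

lemma pdx_diff:
  assumes "f differentiable (at x)" "g differentiable (at x)"
  shows "pdx \<alpha> (\<lambda>y. f y - g y) x = pdx \<alpha> f x - pdx \<alpha> g x"
proof -
  have "((\<lambda>y. f y - g y) has_derivative
      (\<lambda>h. frechet_derivative f (at x) h - frechet_derivative g (at x) h)) (at x)"
    using assms by (intro has_derivative_diff) (simp_all add: frechet_derivative_works[symmetric])
  then show ?thesis
    using assms by (simp add: pdx_has_derivative pdx_frechet_derivative)
qed

definition partials_chain_rule :: "nat set \<Rightarrow> ((nat \<Rightarrow> real) \<Rightarrow> real) \<Rightarrow> bool" where
  "partials_chain_rule J F \<longleftrightarrow>
    (\<forall>z i. ((\<lambda>t. F (z(i := t))) has_real_derivative dz F z i) (at (z i))) \<and>
    (\<forall>(Z :: nat \<Rightarrow> real^4 \<Rightarrow> real) Z' x. (\<forall>j\<in>J. (Z j has_derivative Z' j) (at x)) \<longrightarrow>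
       ((\<lambda>y. F (zval Z y)) has_derivative (\<lambda>h. \<Sum>j\<in>J. dz F (zval Z x) j * Z' j h)) (at x))"

lemma partials_chain_rule_has_real_derivative:
  "partials_chain_rule J F \<Longrightarrow> ((\<lambda>t. F (z(i := t))) has_real_derivative dz F z i) (at (z i))"
  unfolding partials_chain_rule_def by blast

lemma partials_chain_rule_has_derivative:
  "partials_chain_rule J F \<Longrightarrow> (\<And>j. j \<in> J \<Longrightarrow> (Z j has_derivative Z' j) (at x)) \<Longrightarrow>
    ((\<lambda>y. F (zval Z y)) has_derivative (\<lambda>h. \<Sum>j\<in>J. dz F (zval Z x) j * Z' j h)) (at x)"
  unfolding partials_chain_rule_def by blast

lemma pdx_partials_chain_rule:
  assumes F: "partials_chain_rule J F" and Z: "\<And>j. j \<in> J \<Longrightarrow> Z j differentiable (at x)"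
  shows "pdx \<alpha> (\<lambda>y. F (zval Z y)) x = (\<Sum>j\<in>J. dz F (zval Z x) j * dval Z x \<alpha> j)"
proof -
  have "((\<lambda>y. F (zval Z y)) has_derivative
      (\<lambda>h. \<Sum>j\<in>J. dz F (zval Z x) j * frechet_derivative (Z j) (at x) h)) (at x)"
    using Z by (intro partials_chain_rule_has_derivative[OF F])
      (simp add: frechet_derivative_works[symmetric])
  then show ?thesis
    using Z by (simp add: pdx_has_derivative pdx_frechet_derivative dval_def)
qed

lemma dz_eq_derivative:
  "((\<lambda>t. F (z(i := t))) has_real_derivative D) (at (z i)) \<Longrightarrow> dz F z i = D"
  unfolding dz_def by (rule DERIV_imp_deriv)

lemma partials_chain_rule_const: "partials_chain_rule J (\<lambda>z. c)"
  unfolding partials_chain_rule_def dz_def by auto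

lemma partials_chain_rule_coordinate:
  assumes "finite J" "k \<in> J"
  shows "partials_chain_rule J (\<lambda>z. z k)"
proof -
  have dz_coord: "dz (\<lambda>z. z k) z i = (if i = k then 1 else 0)" for z i
    unfolding dz_def by (cases "i = k") auto
  have "(\<lambda>h. \<Sum>j\<in>J. dz (\<lambda>z. z k) w j * Z' j h) = Z' k" for w and Z' :: "nat \<Rightarrow> real^4 \<Rightarrow> real"
    unfolding dz_coord using assms by (simp add: fun_eq_iff if_distrib[of "\<lambda>a. a * _"] cong: if_cong)
  then show ?thesis
    unfolding partials_chain_rule_def using assms
    by (auto simp: zval_def dz_coord)
qed

lemma partials_chain_rule_if:
  "(c \<Longrightarrow> partials_chain_rule J f) \<Longrightarrow> (\<not> c \<Longrightarrow> partials_chain_rule J g) \<Longrightarrow>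
    partials_chain_rule J (\<lambda>z. if c then f z else g z)"
  by (cases c) auto

lemma partials_chain_rule_add:
  assumes f: "partials_chain_rule J f" and g: "partials_chain_rule J g"
  shows "partials_chain_rule J (\<lambda>z. f z + g z)"
proof -
  have D: "((\<lambda>t. f (z(i := t)) + g (z(i := t))) has_real_derivative dz f z i + dz g z i) (at (z i))"
    for z i
    using f g by (intro DERIV_add partials_chain_rule_has_real_derivative)
  have chain: "((\<lambda>y. f (zval Z y) + g (zval Z y)) has_derivative
      (\<lambda>h. \<Sum>j\<in>J. (dz f (zval Z x) j + dz g (zval Z x) j) * Z' j h)) (at x)"
    if "\<forall>j\<in>J. (Z j has_derivative Z' j) (at x)" for Z :: "nat \<Rightarrow> real^4 \<Rightarrow> real" and Z' x
    using has_derivative_add[OF partials_chain_rule_has_derivative[OF f]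
        partials_chain_rule_has_derivative[OF g]] that
    by (simp add: sum.distrib distrib_right)
  have "dz (\<lambda>z. f z + g z) z i = dz f z i + dz g z i" for z i
    using D by (rule dz_eq_derivative)
  then show ?thesis
    unfolding partials_chain_rule_def using D chain by simp
qed

lemma partials_chain_rule_mult:
  assumes f: "partials_chain_rule J f" and g: "partials_chain_rule J g"
  shows "partials_chain_rule J (\<lambda>z. f z * g z)"
proof -
  have D: "((\<lambda>t. f (z(i := t)) * g (z(i := t))) has_real_derivative
      f z * dz g z i + dz f z i * g z) (at (z i))" for z i
    using DERIV_mult'[OF partials_chain_rule_has_real_derivative[OF f, where z=z and i=i]
        partials_chain_rule_has_real_derivative[OF g, where z=z and i=i]]
    by (simp add: algebra_simps)
  have chain: "((\<lambda>y. f (zval Z y) * g (zval Z y)) has_derivative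
      (\<lambda>h. \<Sum>j\<in>J. (f (zval Z x) * dz g (zval Z x) j + dz f (zval Z x) j * g (zval Z x)) * Z' j h)) (at x)"
    if "\<forall>j\<in>J. (Z j has_derivative Z' j) (at x)" for Z :: "nat \<Rightarrow> real^4 \<Rightarrow> real" and Z' x
  proof -
    have "((\<lambda>y. f (zval Z y) * g (zval Z y)) has_derivative (\<lambda>h.
        f (zval Z x) * (\<Sum>j\<in>J. dz g (zval Z x) j * Z' j h) +
        (\<Sum>j\<in>J. dz f (zval Z x) j * Z' j h) * g (zval Z x))) (at x)"
      using that by (intro has_derivative_mult partials_chain_rule_has_derivative[OF f]
          partials_chain_rule_has_derivative[OF g]) auto
    then show ?thesis
      by (simp add: sum.distrib sum_distrib_left sum_distrib_right algebra_simps)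
  qed
  have "dz (\<lambda>z. f z * g z) z i = f z * dz g z i + dz f z i * g z" for z i
    using D by (rule dz_eq_derivative)
  then show ?thesis
    unfolding partials_chain_rule_def using D chain by simp
qed

lemma partials_chain_rule_diff:
  assumes "partials_chain_rule J f" "partials_chain_rule J g"
  shows "partials_chain_rule J (\<lambda>z. f z - g z)"
proof -
  have "partials_chain_rule J (\<lambda>z. f z + (- 1) * g z)"
    using assms by (intro partials_chain_rule_add partials_chain_rule_mult partials_chain_rule_const)
  then show ?thesis
    by simp
qed

lemma partials_chain_rule_sum:
  "finite A \<Longrightarrow> (\<And>s. s \<in> A \<Longrightarrow> partials_chain_rule J (f s)) \<Longrightarrow>
    partials_chain_rule J (\<lambda>z. \<Sum>s\<in>A. f s z)"
proof (induction A rule: finite_induct)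
  case empty
  then show ?case by (simp add: partials_chain_rule_const)
next
  case (insert a A)
  then have "partials_chain_rule J (\<lambda>z. f a z + (\<Sum>s\<in>A. f s z))"
    by (intro partials_chain_rule_add) auto
  then show ?case
    using insert by simp
qed

lemma partials_chain_rule_Lc: "partials_chain_rule {1..15} (Lc \<alpha> j)"
  unfolding Lc_def[abs_def]
  by (intro partials_chain_rule_if partials_chain_rule_diff partials_chain_rule_add
      partials_chain_rule_mult partials_chain_rule_sum partials_chain_rule_coordinate
      partials_chain_rule_const; auto)

lemma pull_Theta_eq_Lagr: "pull_Theta \<epsilon> \<mu>\<^sub>0 z p = Lagr \<epsilon> \<mu>\<^sub>0 z p"
proof -
  have "{0..3::nat} = {0,1,2,3}" by auto
  then show ?thesis
    unfolding pull_Theta_def Lagr_def wedge13_def dxt_def pull_omega_def by simp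
qed

lemma Lagr_eq_Lexpl:
  assumes "\<And>j. j \<in> {1..15} \<Longrightarrow> Z j differentiable (at x)"
  shows "Lagr \<epsilon> \<mu>\<^sub>0 (zval Z x) (dval Z x) = Lexpl \<epsilon> \<mu>\<^sub>0 Z x"
proof -
  have "{0..3::nat} = {0,1,2,3}" "{1..3::nat} = {1,2,3}" by auto
  moreover have "{1..15::nat} = {1,2,3,4,5,6,7,8,9,10,11,12,13,14,15}"
    by (simp add: atLeastAtMostSuc_conv numeral_eq_Suc insert_commute)
  moreover have "Z j differentiable (at x)" if "j \<in> {1,2,3,4,7,8,9,Suc 0}" for j
    using assms that by auto
  ultimately show ?thesis
    unfolding Lagr_def Lexpl_def Let_def curlF_def crossF_def cross3_def zval_def dval_def
      Ham_def Lc_def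
    by (simp add: pdx_mult pdx_diff) (simp add: algebra_simps)
qed

lemma Ham_partial_differentiable:
  assumes \<epsilon>: "\<And>q. \<epsilon> differentiable (at q)"
  shows "(\<lambda>t. Ham \<epsilon> \<mu>\<^sub>0 (z(i := t))) differentiable (at s)"
proof -
  have coord: "(\<lambda>t. (z(i := t)) k) differentiable (at s)"
    and coord': "(\<lambda>t. if k = i then t else z k) differentiable (at s)" for k
    by (cases "k = i"; simp)+
  have "(\<lambda>t. ((z(i := t)) 4, (z(i := t)) 5)) differentiable (at s)"
    by (intro differentiable_Pair coord)
  then have "(\<lambda>t. \<epsilon> ((z(i := t)) 4, (z(i := t)) 5)) differentiable (at s)"
    using differentiable_chain_at[OF _ \<epsilon>] by (simp add: comp_def)
  then show ?thesis
    unfolding Ham_def divide_inverse power2_eq_square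
    by (intro differentiable_minus differentiable_diff differentiable_mult differentiable_sum
        coord differentiable_const) (auto intro!: differentiable_mult coord')
qed

lemma dzL_Lagr:
  assumes "\<And>q. \<epsilon> differentiable (at q)"
  shows "dzL (Lagr \<epsilon> \<mu>\<^sub>0) z p i =
    (\<Sum>\<alpha>\<in>{0..3}. \<Sum>j\<in>{1..15}. dz (Lc \<alpha> j) z i * p \<alpha> j) - dz (Ham \<epsilon> \<mu>\<^sub>0) z i"
proof -
  have "((\<lambda>t. Ham \<epsilon> \<mu>\<^sub>0 (z(i := t))) has_real_derivative dz (Ham \<epsilon> \<mu>\<^sub>0) z i) (at (z i))"
    unfolding dz_def using Ham_partial_differentiable[OF assms] DERIV_deriv_iff_real_differentiable
    by blast
  then have "((\<lambda>t. Lagr \<epsilon> \<mu>\<^sub>0 (z(i := t)) p) has_real_derivative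
      (\<Sum>\<alpha>\<in>{0..3}. \<Sum>j\<in>{1..15}. dz (Lc \<alpha> j) z i * p \<alpha> j) - dz (Ham \<epsilon> \<mu>\<^sub>0) z i) (at (z i))"
    unfolding Lagr_def
    by (intro DERIV_diff DERIV_sum DERIV_cmult_right
        partials_chain_rule_has_real_derivative[OF partials_chain_rule_Lc])
  then show ?thesis
    unfolding dzL_def by (rule DERIV_imp_deriv)
qed

lemma dpL_Lagr:
  assumes "\<alpha> \<in> {0..3}" "i \<in> {1..15}"
  shows "dpL (Lagr \<epsilon> \<mu>\<^sub>0) z p \<alpha> i = Lc \<alpha> i z"
proof -
  have term_deriv: "((\<lambda>t. Lc \<beta> j z * (p(\<alpha> := (p \<alpha>)(i := t))) \<beta> j) has_real_derivative
      (if \<beta> = \<alpha> \<and> j = i then Lc \<beta> j z else 0)) (at (p \<alpha> i))" for \<beta> j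
  proof (cases "\<beta> = \<alpha> \<and> j = i")
    case False
    then have const: "(\<lambda>t. Lc \<beta> j z * (p(\<alpha> := (p \<alpha>)(i := t))) \<beta> j) = (\<lambda>t. Lc \<beta> j z * p \<beta> j)"
      by (auto simp: fun_eq_iff)
    show ?thesis
      unfolding const if_not_P[OF False] by (rule DERIV_const)
  qed (auto intro!: derivative_eq_intros)
  have "((\<lambda>t. Lagr \<epsilon> \<mu>\<^sub>0 z (p(\<alpha> := (p \<alpha>)(i := t)))) has_real_derivative
      (\<Sum>\<beta>\<in>{0..3}. \<Sum>j\<in>{1..15}. if \<beta> = \<alpha> \<and> j = i then Lc \<beta> j z else 0) - 0) (at (p \<alpha> i))"
    unfolding Lagr_def by (intro DERIV_diff DERIV_sum term_deriv DERIV_const)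
  moreover have "(\<Sum>\<beta>\<in>{0..3}. \<Sum>j\<in>{1..15}. if \<beta> = \<alpha> \<and> j = i then Lc \<beta> j z else 0) = Lc \<alpha> i z"
  proof -
    have "(\<Sum>j\<in>{1..15}. if \<beta> = \<alpha> \<and> j = i then Lc \<beta> j z else 0) =
        (if \<beta> = \<alpha> then Lc \<beta> i z else 0)" for \<beta>
      using assms(2) by (cases "\<beta> = \<alpha>") simp_all
    then show ?thesis
      using assms(1) by simp
  qed
  ultimately show ?thesis
    unfolding dpL_def using DERIV_imp_deriv by fastforce
qed

lemma EL_eq_Kmat:
  assumes "\<And>q. \<epsilon> differentiable (at q)"
    and Z: "\<And>j x. j \<in> {1..15} \<Longrightarrow> Z j differentiable (at x)"
    and i: "i \<in> {1..15}"
  shows "EL \<epsilon> \<mu>\<^sub>0 Z i x =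
    (\<Sum>\<alpha>\<in>{0..3}. \<Sum>j\<in>{1..15}. Kmat \<alpha> i j (zval Z x) * dval Z x \<alpha> j) - dz (Ham \<epsilon> \<mu>\<^sub>0) (zval Z x) i"
proof -
  have "pdx \<alpha> (\<lambda>y. dpL (Lagr \<epsilon> \<mu>\<^sub>0) (zval Z y) (dval Z y) \<alpha> i) x =
      (\<Sum>j\<in>{1..15}. dz (Lc \<alpha> i) (zval Z x) j * dval Z x \<alpha> j)" if "\<alpha> \<in> {0..3}" for \<alpha>
    using dpL_Lagr[OF that i] pdx_partials_chain_rule[OF partials_chain_rule_Lc Z] by simp
  then have "EL \<epsilon> \<mu>\<^sub>0 Z i x =
      (\<Sum>\<alpha>\<in>{0..3}. \<Sum>j\<in>{1..15}. dz (Lc \<alpha> j) (zval Z x) i * dval Z x \<alpha> j)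
      - dz (Ham \<epsilon> \<mu>\<^sub>0) (zval Z x) i
      - (\<Sum>\<alpha>\<in>{0..3}. \<Sum>j\<in>{1..15}. dz (Lc \<alpha> i) (zval Z x) j * dval Z x \<alpha> j)"
    unfolding EL_def dzL_Lagr[OF assms(1)] by simp
  then show ?thesis
    by (simp add: Kmat_def left_diff_distrib sum_subtractf)
qed

theorem proposition1:
  fixes \<epsilon> :: "real \<times> real \<Rightarrow> real" and \<mu>\<^sub>0 :: real
    and Z :: "nat \<Rightarrow> real^4 \<Rightarrow> real"
  assumes eps_smooth: "\<And>q. \<epsilon> differentiable (at q)"
    and mu0_pos: "\<mu>\<^sub>0 > 0"
    and Z_diff: "\<And>j x. j \<in> {1..15} \<Longrightarrow> Z j differentiable (at x)"
  shows
    "(\<forall>x. pull_Theta \<epsilon> \<mu>\<^sub>0 (zval Z x) (dval Z x) = Lagr \<epsilon> \<mu>\<^sub>0 (zval Z x) (dval Z x)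
          \<and> Lagr \<epsilon> \<mu>\<^sub>0 (zval Z x) (dval Z x) = Lexpl \<epsilon> \<mu>\<^sub>0 Z x)
     \<and> (\<forall>i\<in>{1..15}. \<forall>x.
          EL \<epsilon> \<mu>\<^sub>0 Z i x =
            (\<Sum>\<alpha>\<in>{0..3}. \<Sum>j\<in>{1..15}. Kmat \<alpha> i j (zval Z x) * dval Z x \<alpha> j)
            - dz (Ham \<epsilon> \<mu>\<^sub>0) (zval Z x) i)
     \<and> (\<forall>x. (\<forall>i\<in>{1..15}. EL \<epsilon> \<mu>\<^sub>0 Z i x = 0) \<longleftrightarrow>
             (\<forall>i\<in>{1..15}. (\<Sum>\<alpha>\<in>{0..3}. \<Sum>j\<in>{1..15}. Kmat \<alpha> i j (zval Z x) * dval Z x \<alpha> j)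
                          = dz (Ham \<epsilon> \<mu>\<^sub>0) (zval Z x) i))"
  using pull_Theta_eq_Lagr Lagr_eq_Lexpl[OF Z_diff] EL_eq_Kmat[OF eps_smooth Z_diff] by simp

end
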